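(* Let $d\ge1$ and $\beta>0$. There exist constants $0<c_0<C_0$, $h_0>0$ and $A>0$ such that for every sample size $n$ there are two probability densities $f_1,f_2$ on $\mathbb{R}^d$, each with compact support and a unique global mode (denote the modes by $x_1$ and $x_2$), each satisfying, with $x_0$ its mode, $$f(x_0)-C_0\|x-x_0\|^\beta \le f(x)\le f(x_0)-c_0\|x-x_0\|^\beta \quad\text{whenever } \|x-x_0\|\le h_0,$$ $$f(x)\le f(x_0)-c_0h_0^\beta \quad\text{whenever } \|x-x_0\|\ge h_0,$$ whose modes satisfy $\|x_1-x_2\|\ge n^{-1/(d+2\beta)}/A$, and which cannot be distinguished based on an i.i.d. sample of size $n$ with probability of error smaller than $1/5$: for every test $\psi$ that is a measurable function of $X_1,\dots,X_n$ with values in $\{1,2\}$, $\max_{j\in\{1,2\}} P_{f_j}^{\otimes n}(\psi\ne j)\ge 1/5$.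
   Context: $\|x\|=\max_i|x_i|$ denotes the sup-norm on $\mathbb{R}^d$. $P_{f}^{\otimes n}$ denotes the law of an i.i.d. sample $X_1,\dots,X_n$ from density $f$. *)

theory Defs
  imports "HOL-Probability.Probability"
begin

text \<open>Sup-norm on R^d, with R^d rendered as real^'n (d = CARD('n)).\<close>
definition sup_norm :: "real^'n \<Rightarrow> real" where
  "sup_norm x = Max (range (\<lambda>i. \<bar>x $ i\<bar>))"

definition prob_density :: "(real^'n \<Rightarrow> real) \<Rightarrow> bool" where
  "prob_density f \<longleftrightarrow> f \<in> borel_measurable lborel \<and> (\<forall>x. 0 \<le> f x)
     \<and> (\<integral>\<^sup>+ x. ennreal (f x) \<partial>lborel) = 1"

definition compact_support :: "(real^'n \<Rightarrow> real) \<Rightarrow> bool" where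
  "compact_support f \<longleftrightarrow> compact (closure {x. f x \<noteq> 0})"

definition unique_mode :: "(real^'n \<Rightarrow> real) \<Rightarrow> real^'n \<Rightarrow> bool" where
  "unique_mode f x0 \<longleftrightarrow> (\<forall>x. x \<noteq> x0 \<longrightarrow> f x < f x0)"

definition mode_regular ::
  "real \<Rightarrow> real \<Rightarrow> real \<Rightarrow> real \<Rightarrow> (real^'n \<Rightarrow> real) \<Rightarrow> real^'n \<Rightarrow> bool" where
  "mode_regular c0 C0 h0 \<beta> f x0 \<longleftrightarrow>
     (\<forall>x. sup_norm (x - x0) \<le> h0 \<longrightarrow>
          f x0 - C0 * sup_norm (x - x0) powr \<beta> \<le> f x \<and>
          f x \<le> f x0 - c0 * sup_norm (x - x0) powr \<beta>) \<and>
     (\<forall>x. sup_norm (x - x0) \<ge> h0 \<longrightarrow> f x \<le> f x0 - c0 * h0 powr \<beta>)"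

definition sample_law :: "(real^'n \<Rightarrow> real) \<Rightarrow> nat \<Rightarrow> (nat \<Rightarrow> real^'n) measure" where
  "sample_law f n = PiM {..<n} (\<lambda>_. density lborel (\<lambda>x. ennreal (f x)))"

end

theory Submission
  imports Defs
begin

text \<open>The cusp \<open>g x = max 0 (1 - infnorm x powr \<beta>)\<close> has its mode at \<open>0\<close>. Taking the
  maximum with the steeper cusp \<open>1 + \<delta> powr \<beta> - K * infnorm (x - \<delta> *\<^sub>R One) powr \<beta>\<close>,
  where \<open>K = 1 + 2 powr \<beta>\<close>, moves the mode to distance \<open>\<delta>\<close> but changes \<open>g\<close> only by
  \<open>O(\<delta> powr \<beta>)\<close> on a cube of side \<open>2 * \<delta>\<close> on which \<open>g \<ge> 1/2\<close>. So in dimension \<open>d\<close>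
  the chi-square divergence between the two normalized densities is \<open>O(\<delta> powr (d + 2 * \<beta>))\<close>,
  and for \<open>\<delta> = n powr (-1 / (d + 2 * \<beta>)) / A\<close> the likelihood ratio of \<open>n\<close> samples has
  second moment at most \<open>8/7\<close>. Le Cam's two-point argument then bounds the worse of the two
  error probabilities of any test from below.\<close>

section \<open>The sup norm and cubes\<close>

lemma sup_norm_eq_infnorm: "sup_norm = (infnorm :: real^'n \<Rightarrow> real)"
proof
  fix x :: "real^'n"
  have "{\<bar>x $ i\<bar> |i. i \<in> UNIV} = range (\<lambda>i. \<bar>x $ i\<bar>)" by auto
  then show "sup_norm x = infnorm x"
    unfolding sup_norm_def infnorm_cart by (simp add: cSup_eq_Max)
qed

lemma borel_measurable_infnorm [measurable]:
  "(infnorm :: 'a::euclidean_space \<Rightarrow> real) \<in> borel_measurable borel"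
  by (intro borel_measurable_continuous_onI continuous_on_infnorm continuous_on_id)

lemma inner_One_Basis: "b \<in> Basis \<Longrightarrow> One \<bullet> b = (1::real)"
  by (simp add: inner_sum_left inner_Basis if_distrib cong: if_cong)

lemma infnorm_scaleR_One: "0 \<le> r \<Longrightarrow> infnorm (r *\<^sub>R (One :: 'a::euclidean_space)) = r"
  by (simp add: infnorm_mul infnorm_Max inner_One_Basis image_constant_conv)

lemma infnorm_le_iff: "infnorm (x :: 'a::euclidean_space) \<le> r \<longleftrightarrow> (\<forall>b\<in>Basis. \<bar>x \<bullet> b\<bar> \<le> r)"
  by (simp add: infnorm_Max)

lemma infnorm_diff_le_iff_cbox:
  "infnorm (x - c) \<le> r \<longleftrightarrow> x \<in> cbox (c - r *\<^sub>R One) (c + r *\<^sub>R (One :: 'a::euclidean_space))"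
  by (auto simp: infnorm_le_iff mem_box inner_diff_left inner_add_left inner_One_Basis abs_le_iff)

lemma measure_infnorm_cube:
  assumes "0 \<le> r"
  shows "measure lborel (cbox (c - r *\<^sub>R One) (c + r *\<^sub>R (One :: 'a::euclidean_space))) = (2 * r) ^ DIM('a)"
  using assms by (simp add: content_cbox inner_diff_left inner_add_left inner_One_Basis)

context
  fixes u :: "'a::euclidean_space \<Rightarrow> real" and b r :: real and c :: 'a
  assumes u_measurable [measurable]: "u \<in> borel_measurable lborel"
    and u_nonneg: "\<And>x. 0 \<le> u x" and u_le: "\<And>x. u x \<le> b"
    and u_support: "\<And>x. u x \<noteq> 0 \<Longrightarrow> infnorm (x - c) \<le> r"
begin

private abbreviation cube :: "'a set" where "cube \<equiv> cbox (c - r *\<^sub>R One) (c + r *\<^sub>R One)"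

private lemma le_indicator_cube: "u x \<le> b * indicator cube x"
  using u_le[of x] u_support[of x] infnorm_diff_le_iff_cbox[of x c r]
  by (cases "u x = 0") (auto simp: u_nonneg indicator_def)

private lemma integrable_indicator_cube: "integrable lborel (\<lambda>x. b * indicator cube x :: real)"
  using emeasure_lborel_cbox_finite by (intro integrable_mult_right integrable_real_indicator) auto

lemma integrable_cube_supported: "integrable lborel u"
  by (rule Bochner_Integration.integrable_bound[OF integrable_indicator_cube])
     (use u_nonneg le_indicator_cube in \<open>auto intro!: AE_I2 intro: order_trans[OF _ abs_ge_self]\<close>)

lemma integral_cube_supported_le:
  assumes "0 \<le> r"
  shows "integral\<^sup>L lborel u \<le> b * (2 * r) ^ DIM('a)"
proof -
  have "integral\<^sup>L lborel u \<le> integral\<^sup>L lborel (\<lambda>x. b * indicator cube x :: real)"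
    by (rule integral_mono[OF integrable_cube_supported integrable_indicator_cube le_indicator_cube])
  also have "\<dots> = b * (2 * r) ^ DIM('a)"
    using measure_infnorm_cube[OF assms, of c] by simp
  finally show ?thesis .
qed

end

section \<open>Normalized densities\<close>

definition normalized :: "('a::euclidean_space \<Rightarrow> real) \<Rightarrow> 'a \<Rightarrow> real" where
  "normalized u = (\<lambda>x. u x / integral\<^sup>L lborel u)"

lemma prob_density_normalized:
  fixes u :: "real^'n \<Rightarrow> real"
  assumes [measurable]: "u \<in> borel_measurable lborel" and "\<And>x. 0 \<le> u x"
    and "integrable lborel u" and "0 < integral\<^sup>L lborel u"
  shows "prob_density (normalized u)"
proof -
  have "(\<integral>\<^sup>+ x. ennreal (normalized u x) \<partial>lborel) = ennreal (integral\<^sup>L lborel (normalized u))"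
    using assms unfolding normalized_def by (intro nn_integral_eq_integral) auto
  then show ?thesis
    unfolding prob_density_def using assms by (auto simp: normalized_def)
qed

lemma prob_space_density_if_prob_density:
  "prob_density f \<Longrightarrow> prob_space (density lborel (\<lambda>x. ennreal (f x)))"
  unfolding prob_density_def by (intro prob_spaceI) (simp add: emeasure_density)

lemma compact_support_normalized:
  fixes u :: "real^'n \<Rightarrow> real"
  assumes "\<And>x. u x \<noteq> 0 \<Longrightarrow> infnorm x \<le> r"
  shows "compact_support (normalized u)"
proof -
  have "{x. normalized u x \<noteq> 0} \<subseteq> cbox (0 - r *\<^sub>R One) (0 + r *\<^sub>R One)"
    using assms infnorm_diff_le_iff_cbox[of _ 0 r] by (auto simp: normalized_def)
  then have "bounded {x. normalized u x \<noteq> 0}"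
    using bounded_cbox bounded_subset by blast
  then show ?thesis unfolding compact_support_def by simp
qed

lemma mode_regular_normalized:
  fixes u :: "real^'n \<Rightarrow> real"
  defines "Z \<equiv> integral\<^sup>L lborel u"
  assumes Z: "0 < Z"
    and lower: "\<And>x. u x0 - C * infnorm (x - x0) powr \<beta> \<le> u x"
    and upper: "\<And>x. u x \<le> u x0 - c * min (infnorm (x - x0)) 1 powr \<beta>"
    and "c0 \<le> c / Z" and "C / Z \<le> C0"
  shows "mode_regular c0 C0 1 \<beta> (normalized u) x0"
  unfolding mode_regular_def sup_norm_eq_infnorm normalized_def Z_def[symmetric]
proof (intro conjI allI impI)
  fix x assume near: "infnorm (x - x0) \<le> 1"
  let ?p = "infnorm (x - x0) powr \<beta>"
  have "u x0 / Z - C0 * ?p \<le> (u x0 - C * ?p) / Z"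
    using mult_right_mono[OF \<open>C / Z \<le> C0\<close>, of ?p] Z by (simp add: diff_divide_distrib)
  also have "\<dots> \<le> u x / Z"
    using lower[of x] Z by (intro divide_right_mono) auto
  finally show "u x0 / Z - C0 * ?p \<le> u x / Z" .
  have "u x / Z \<le> (u x0 - c * ?p) / Z"
    using upper[of x] near Z by (intro divide_right_mono) auto
  also have "\<dots> \<le> u x0 / Z - c0 * ?p"
    using mult_right_mono[OF \<open>c0 \<le> c / Z\<close>, of ?p] Z by (simp add: diff_divide_distrib)
  finally show "u x / Z \<le> u x0 / Z - c0 * ?p" .
next
  fix x assume "1 \<le> infnorm (x - x0)"
  then have "u x / Z \<le> (u x0 - c) / Z"
    using upper[of x] Z by (intro divide_right_mono) auto
  then show "u x / Z \<le> u x0 / Z - c0 * 1 powr \<beta>"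
    using \<open>c0 \<le> c / Z\<close> Z by (simp add: diff_divide_distrib)
qed

lemma unique_mode_if_mode_regular:
  assumes "mode_regular c0 C0 h0 \<beta> f x0" "0 < c0" "0 < h0" "0 < \<beta>"
  shows "unique_mode f x0"
  unfolding unique_mode_def
proof (intro allI impI)
  fix x assume "x \<noteq> x0"
  then have pos: "0 < sup_norm (x - x0)"
    by (simp add: sup_norm_eq_infnorm infnorm_pos_lt)
  show "f x < f x0"
  proof (cases "sup_norm (x - x0) \<le> h0")
    case True
    then have "f x \<le> f x0 - c0 * sup_norm (x - x0) powr \<beta>"
      using assms(1) unfolding mode_regular_def by blast
    then show ?thesis using pos assms by (smt (verit) mult_pos_pos powr_gt_zero)
  next
    case False
    then have "f x \<le> f x0 - c0 * h0 powr \<beta>"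
      using assms(1) unfolding mode_regular_def by auto
    then show ?thesis using assms by (smt (verit) mult_pos_pos powr_gt_zero)
  qed
qed

section \<open>Testing two densities\<close>

definition test_error_ge :: "'a measure \<Rightarrow> 'a measure \<Rightarrow> real \<Rightarrow> bool" where
  "test_error_ge P1 P2 \<epsilon> \<longleftrightarrow> (\<forall>\<psi>. \<psi> \<in> P1 \<rightarrow>\<^sub>M count_space {1, 2::nat} \<longrightarrow>
     max (measure P1 {\<omega> \<in> space P1. \<psi> \<omega> \<noteq> 1}) (measure P2 {\<omega> \<in> space P2. \<psi> \<omega> \<noteq> 2}) \<ge> \<epsilon>)"

lemma test_error_ge_mono: "test_error_ge P1 P2 \<epsilon> \<Longrightarrow> \<epsilon>' \<le> \<epsilon> \<Longrightarrow> test_error_ge P1 P2 \<epsilon>'"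
  unfolding test_error_ge_def by force

lemma test_error_ge_if_measure_diff_le:
  assumes "prob_space P2" and sets_eq: "sets P2 = sets P1"
    and diff_le: "\<And>B. B \<in> sets P1 \<Longrightarrow> measure P2 B - measure P1 B \<le> t"
  shows "test_error_ge P1 P2 ((1 - t) / 2)"
  unfolding test_error_ge_def
proof (intro allI impI)
  interpret P2: prob_space P2 by fact
  fix \<psi> assume \<psi>: "\<psi> \<in> P1 \<rightarrow>\<^sub>M count_space {1, 2::nat}"
  define B where "B = {\<omega> \<in> space P1. \<psi> \<omega> \<noteq> 1}"
  have space_eq: "space P2 = space P1" using sets_eq_imp_space_eq[OF sets_eq] .
  have B_eq: "B = \<psi> -` {2} \<inter> space P1"
    unfolding B_def using measurable_space[OF \<psi>] by auto
  have B: "B \<in> sets P1" unfolding B_eq by (rule measurable_sets[OF \<psi>]) simp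
  have "{\<omega> \<in> space P2. \<psi> \<omega> \<noteq> 2} = space P2 - B"
    unfolding B_def space_eq using measurable_space[OF \<psi>] by auto
  then have "measure P2 {\<omega> \<in> space P2. \<psi> \<omega> \<noteq> 2} = 1 - measure P2 B"
    using P2.prob_compl B sets_eq by simp
  then show "max (measure P1 B) (measure P2 {\<omega> \<in> space P2. \<psi> \<omega> \<noteq> 2}) \<ge> (1 - t) / 2"
    using diff_le[OF B] by (simp add: max_def)
qed

text \<open>The pointwise bound \<open>(L - 1) * indicator B \<le> (L - 1)\<^sup>2 + 1/4\<close> replaces Cauchy-Schwarz.\<close>
lemma measure_density_diff_le:
  fixes L :: "'a \<Rightarrow> real"
  assumes "prob_space M" and [measurable]: "L \<in> borel_measurable M"
    and L_nonneg: "\<And>x. 0 \<le> L x" and L_mass: "(\<integral>\<^sup>+ x. L x \<partial>M) = 1"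
    and L_square: "(\<integral>\<^sup>+ x. (L x)\<^sup>2 \<partial>M) \<le> ennreal q" and "0 \<le> q"
    and B: "B \<in> sets M"
  shows "measure (density M L) B - measure M B \<le> q - 3/4"
proof -
  interpret prob_space M by fact
  have "has_bochner_integral M L 1"
    using L_mass L_nonneg by (intro has_bochner_integral_nn_integral) auto
  then have int_L: "integrable M L" and E_L: "expectation L = 1"
    by (auto simp: has_bochner_integral_iff)
  have int_L2: "integrable M (\<lambda>x. (L x)\<^sup>2)"
    using L_square by (intro integrableI_bounded) (auto simp: le_less_trans)
  have int_LB: "integrable M (\<lambda>x. L x * indicator B x)"
    using B int_L by (rule integrable_real_mult_indicator)
  have int_B: "integrable M (indicator B :: 'a \<Rightarrow> real)"
    using B by (intro integrable_real_indicator) (simp_all add: less_top[symmetric])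
  have "ennreal (expectation (\<lambda>x. (L x)\<^sup>2)) \<le> ennreal q"
    using nn_integral_eq_integral[OF int_L2] L_square by simp
  then have E_L2: "expectation (\<lambda>x. (L x)\<^sup>2) \<le> q"
    using \<open>0 \<le> q\<close> by (auto simp: ennreal_le_iff2)
  have "emeasure (density M L) B = (\<integral>\<^sup>+ x. ennreal (L x * indicator B x) \<partial>M)"
    using B by (simp add: emeasure_density) (intro nn_integral_cong; simp add: indicator_def)
  also have "\<dots> = ennreal (expectation (\<lambda>x. L x * indicator B x))"
    using int_LB L_nonneg by (intro nn_integral_eq_integral) auto
  finally have "measure (density M L) B = expectation (\<lambda>x. L x * indicator B x)"
    unfolding measure_def using L_nonneg by (simp add: integral_nonneg_AE)
  moreover have "measure M B = expectation (indicator B)"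
    using B by simp
  moreover have "L x * indicator B x - indicator B x \<le> (L x)\<^sup>2 - 2 * L x + 5/4" for x
  proof -
    have "0 \<le> (L x - 3/2)\<^sup>2" "0 \<le> (L x - 1)\<^sup>2 + 1/4" by simp_all
    then show ?thesis by (auto simp: indicator_def power2_eq_square algebra_simps)
  qed
  then have "expectation (\<lambda>x. L x * indicator B x - indicator B x)
      \<le> expectation (\<lambda>x. (L x)\<^sup>2 - 2 * L x + 5/4)"
    using int_LB int_B int_L int_L2 by (intro integral_mono) auto
  ultimately show ?thesis
    using int_LB int_B int_L int_L2 E_L E_L2 by (simp add: prob_space)
qed

lemma nn_integral_PiM_prod_power:
  assumes "sigma_finite_measure M" "finite I" "f \<in> borel_measurable M"
  shows "(\<integral>\<^sup>+ \<omega>. (\<Prod>i\<in>I. f (\<omega> i)) \<partial>PiM I (\<lambda>_. M)) = (\<integral>\<^sup>+ x. f x \<partial>M) ^ card I"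
proof -
  interpret product_sigma_finite "\<lambda>_. M"
    by (intro product_sigma_finite.intro assms)
  show ?thesis
    using product_nn_integral_prod[of I "\<lambda>_. f"] assms by (simp add: prod_constant)
qed

lemma indicator_PiE_eq_prod:
  assumes "\<omega> \<in> extensional I" "finite I"
  shows "(indicator (Pi\<^sub>E I A) \<omega> :: ennreal) = (\<Prod>i\<in>I. indicator (A i) (\<omega> i))"
proof (cases "\<omega> \<in> Pi\<^sub>E I A")
  case True
  then show ?thesis by (auto simp: indicator_def PiE_def Pi_def intro!: prod.neutral)
next
  case False
  then obtain i where "i \<in> I" "\<omega> i \<notin> A i" using assms(1) by (auto simp: PiE_def Pi_def)
  then show ?thesis using False assms(2) by (auto simp: indicator_def)
qed

lemma PiM_density:
  fixes r :: "'a \<Rightarrow> ennreal"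
  assumes "prob_space M" "prob_space (density M r)"
    and [measurable]: "r \<in> borel_measurable M" and "finite I"
  shows "PiM I (\<lambda>_. density M r) = density (PiM I (\<lambda>_. M)) (\<lambda>\<omega>. \<Prod>i\<in>I. r (\<omega> i))"
proof -
  interpret M: product_sigma_finite "\<lambda>_. M"
    by (intro product_sigma_finite.intro prob_space_imp_sigma_finite assms)
  interpret D: product_sigma_finite "\<lambda>_. density M r"
    by (intro product_sigma_finite.intro prob_space_imp_sigma_finite assms)
  show ?thesis
  proof (rule D.PiM_eqI[symmetric, OF \<open>finite I\<close>])
    show "sets (density (PiM I (\<lambda>_. M)) (\<lambda>\<omega>. \<Prod>i\<in>I. r (\<omega> i))) = sets (PiM I (\<lambda>_. density M r))"
      unfolding sets_density by (rule sets_PiM_cong) auto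
  next
    fix A assume "\<And>i. i \<in> I \<Longrightarrow> A i \<in> sets (density M r)"
    then have A [measurable]: "\<And>i. i \<in> I \<Longrightarrow> A i \<in> sets M" by simp
    have PiE_A: "Pi\<^sub>E I A \<in> sets (PiM I (\<lambda>_. M))"
      using \<open>finite I\<close> by (intro sets_PiM_I_finite) auto
    have "emeasure (density (PiM I (\<lambda>_. M)) (\<lambda>\<omega>. \<Prod>i\<in>I. r (\<omega> i))) (Pi\<^sub>E I A)
        = (\<integral>\<^sup>+ \<omega>. (\<Prod>i\<in>I. r (\<omega> i)) * indicator (Pi\<^sub>E I A) \<omega> \<partial>PiM I (\<lambda>_. M))"
      by (rule emeasure_density[OF _ PiE_A]) measurable
    also have "\<dots> = (\<integral>\<^sup>+ \<omega>. (\<Prod>i\<in>I. r (\<omega> i) * indicator (A i) (\<omega> i)) \<partial>PiM I (\<lambda>_. M))"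
      using \<open>finite I\<close>
      by (intro nn_integral_cong) (simp add: space_PiM PiE_iff indicator_PiE_eq_prod prod.distrib)
    also have "\<dots> = (\<Prod>i\<in>I. \<integral>\<^sup>+ x. r x * indicator (A i) x \<partial>M)"
      using \<open>finite I\<close> by (intro M.product_nn_integral_prod) measurable
    also have "\<dots> = (\<Prod>i\<in>I. emeasure (density M r) (A i))"
      by (intro prod.cong) (auto simp: emeasure_density)
    finally show "emeasure (density (PiM I (\<lambda>_. M)) (\<lambda>\<omega>. \<Prod>i\<in>I. r (\<omega> i))) (Pi\<^sub>E I A)
        = (\<Prod>i\<in>I. emeasure (density M r) (A i))" .
  qed
qed

text \<open>Le Cam's two-point argument: the likelihood ratio of the samples is \<open>\<Prod>i\<in>I. r (\<omega> i)\<close>,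
  whose second moment is \<open>q ^ card I\<close>.\<close>
lemma test_error_ge_PiM_density:
  fixes r :: "'a \<Rightarrow> real"
  assumes M: "prob_space M" and [measurable]: "r \<in> borel_measurable M"
    and r_nonneg: "\<And>x. 0 \<le> r x" and r_mass: "(\<integral>\<^sup>+ x. r x \<partial>M) = 1"
    and r_square: "(\<integral>\<^sup>+ x. (r x)\<^sup>2 \<partial>M) \<le> ennreal q" and "0 \<le> q" and "finite I"
  shows "test_error_ge (PiM I (\<lambda>_. M)) (PiM I (\<lambda>_. density M r)) ((7/4 - q ^ card I) / 2)"
proof -
  let ?L = "\<lambda>\<omega>. \<Prod>i\<in>I. r (\<omega> i)"
  have sf: "sigma_finite_measure M" using M by (rule prob_space_imp_sigma_finite)
  have "prob_space (density M r)"
    using r_mass by (intro prob_spaceI) (simp add: emeasure_density)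
  then have P2: "PiM I (\<lambda>_. density M r) = density (PiM I (\<lambda>_. M)) ?L"
    using PiM_density[OF M _ _ \<open>finite I\<close>] r_nonneg by (simp add: prod_ennreal)
  have "(\<integral>\<^sup>+ \<omega>. ?L \<omega> \<partial>PiM I (\<lambda>_. M)) = (\<integral>\<^sup>+ x. r x \<partial>M) ^ card I"
    using nn_integral_PiM_prod_power[OF sf \<open>finite I\<close>, of "\<lambda>x. ennreal (r x)"] r_nonneg by (simp add: prod_ennreal)
  then have L_mass: "(\<integral>\<^sup>+ \<omega>. ?L \<omega> \<partial>PiM I (\<lambda>_. M)) = 1"
    using r_mass by simp
  have "(\<integral>\<^sup>+ \<omega>. (?L \<omega>)\<^sup>2 \<partial>PiM I (\<lambda>_. M)) = (\<integral>\<^sup>+ x. (r x)\<^sup>2 \<partial>M) ^ card I"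
    using nn_integral_PiM_prod_power[OF sf \<open>finite I\<close>, of "\<lambda>x. ennreal ((r x)\<^sup>2)"]
    by (simp add: prod_ennreal prod_power_distrib)
  also have "\<dots> \<le> ennreal (q ^ card I)"
    using power_mono[OF r_square] \<open>0 \<le> q\<close> by (simp add: ennreal_power)
  finally have L_square: "(\<integral>\<^sup>+ \<omega>. (?L \<omega>)\<^sup>2 \<partial>PiM I (\<lambda>_. M)) \<le> ennreal (q ^ card I)" .
  have P1: "prob_space (PiM I (\<lambda>_. M))"
    using M by (intro prob_space_PiM) auto
  have "test_error_ge (PiM I (\<lambda>_. M)) (density (PiM I (\<lambda>_. M)) ?L) ((1 - (q ^ card I - 3/4)) / 2)"
  proof (rule test_error_ge_if_measure_diff_le)
    show "prob_space (density (PiM I (\<lambda>_. M)) ?L)"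
      unfolding P2[symmetric] using \<open>prob_space (density M r)\<close> by (intro prob_space_PiM) auto
    show "measure (density (PiM I (\<lambda>_. M)) ?L) B - measure (PiM I (\<lambda>_. M)) B \<le> q ^ card I - 3/4"
      if "B \<in> sets (PiM I (\<lambda>_. M))" for B
      using that by (intro measure_density_diff_le[OF P1 _ _ L_mass L_square])
        (auto simp: r_nonneg prod_nonneg \<open>0 \<le> q\<close>)
  qed simp
  then show ?thesis unfolding P2 by simp
qed

text \<open>Where \<open>f\<close> vanishes, the ratio \<open>g x / f x\<close> takes the junk value \<open>0\<close>; this is harmless
  because \<open>g\<close> vanishes there too.\<close>
context
  fixes f g :: "'a \<Rightarrow> real" and M :: "'a measure"
  assumes f_measurable [measurable]: "f \<in> borel_measurable M"
    and g_measurable [measurable]: "g \<in> borel_measurable M"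
    and f_nonneg: "\<And>x. 0 \<le> f x" and abs_cont: "\<And>x. f x = 0 \<Longrightarrow> g x = 0"
begin

private lemma ennreal_mult_ratio: "ennreal (f x) * ennreal (g x / f x) = ennreal (g x)"
  using f_nonneg[of x] abs_cont[of x] by (cases "f x = 0") (auto simp: ennreal_mult'[symmetric])

lemma density_density_ratio: "density (density M f) (\<lambda>x. g x / f x) = density M g"
  by (simp add: density_density_eq ennreal_mult_ratio)

lemma nn_integral_density_ratio: "(\<integral>\<^sup>+ x. g x / f x \<partial>density M f) = (\<integral>\<^sup>+ x. g x \<partial>M)"
  by (simp add: nn_integral_density ennreal_mult_ratio)

end

lemma square_div_le:
  fixes g D k :: real
  assumes "0 < g" "0 \<le> D" "D \<le> k" "D \<noteq> 0 \<Longrightarrow> 1/2 \<le> g"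
  shows "(g + D)\<^sup>2 / g \<le> g + (2 + 2 * k) * D"
proof -
  have "D * D \<le> 2 * k * D * g"
  proof (cases "D = 0")
    case False
    then have "1 \<le> 2 * g" using assms by simp
    have "D * D \<le> k * D" using assms by (simp add: mult_right_mono)
    also have "\<dots> \<le> k * D * (2 * g)"
      using mult_left_mono[OF \<open>1 \<le> 2 * g\<close>, of "k * D"] assms by simp
    finally show ?thesis by (simp add: algebra_simps)
  qed simp
  then show ?thesis
    using assms by (simp add: divide_le_eq power2_eq_square algebra_simps)
qed

lemma normalized_ratio_square_le:
  fixes g h k Zg Zh :: real
  assumes "0 \<le> g" "g \<le> h" "h - g \<le> k" "h \<noteq> g \<Longrightarrow> 1/2 \<le> g" "0 < Zg" "0 < Zh"
  shows "g / Zg * ((h / Zh) / (g / Zg))\<^sup>2 \<le> Zg / Zh\<^sup>2 * (g + (2 + 2 * k) * (h - g))"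
proof (cases "g = 0")
  case True
  then show ?thesis using assms by force
next
  case False
  then have "0 < g" using assms by simp
  have "g / Zg * ((h / Zh) / (g / Zg))\<^sup>2 = Zg / Zh\<^sup>2 * ((g + (h - g))\<^sup>2 / g)"
    using \<open>0 < g\<close> assms by (simp add: field_simps power2_eq_square)
  also have "\<dots> \<le> Zg / Zh\<^sup>2 * (g + (2 + 2 * k) * (h - g))"
    using \<open>0 < g\<close> assms by (intro mult_left_mono square_div_le) auto
  finally show ?thesis .
qed

lemma normalized_second_moment_le:
  fixes Z m k :: real
  assumes "0 < Z" "0 \<le> m" "0 \<le> k"
  shows "Z / (Z + m)\<^sup>2 * (Z + (2 + 2 * k) * m) \<le> 1 + 2 * k * m / Z"
proof -
  have pos: "0 < (Z + m)\<^sup>2" using assms by simp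
  have "Z * (Z + 2 * m) \<le> (Z + m)\<^sup>2" "Z * Z \<le> (Z + m)\<^sup>2"
    using assms by (simp_all add: power2_eq_square algebra_simps)
  moreover have "(2 * k * m) * (Z * Z) \<le> (2 * k * m) * (Z + m)\<^sup>2"
    using assms \<open>Z * Z \<le> (Z + m)\<^sup>2\<close> by (intro mult_left_mono) auto
  ultimately have "Z * (Z + 2 * m) / (Z + m)\<^sup>2 \<le> 1" "Z * (2 * k * m) / (Z + m)\<^sup>2 \<le> 2 * k * m / Z"
    using assms pos by (auto simp: divide_le_eq le_divide_eq ac_simps)
  moreover have "Z / (Z + m)\<^sup>2 * (Z + (2 + 2 * k) * m)
      = Z * (Z + 2 * m) / (Z + m)\<^sup>2 + Z * (2 * k * m) / (Z + m)\<^sup>2"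
    by (simp add: add_divide_distrib[symmetric] algebra_simps)
  ultimately show ?thesis by linarith
qed

lemma chi_square_normalized_le:
  fixes g h :: "'a::euclidean_space \<Rightarrow> real"
  assumes [measurable]: "g \<in> borel_measurable lborel" "h \<in> borel_measurable lborel"
    and int_g: "integrable lborel g" and int_h: "integrable lborel h"
    and g_nonneg: "\<And>x. 0 \<le> g x" and g_le_h: "\<And>x. g x \<le> h x" and diff_le: "\<And>x. h x - g x \<le> k"
    and g_large: "\<And>x. h x \<noteq> g x \<Longrightarrow> 1/2 \<le> g x"
    and Zg_pos: "0 < integral\<^sup>L lborel g"
  shows "(\<integral>\<^sup>+ x. (normalized h x / normalized g x)\<^sup>2 \<partial>density lborel (normalized g))
    \<le> ennreal (1 + 2 * k * (integral\<^sup>L lborel h - integral\<^sup>L lborel g) / integral\<^sup>L lborel g)"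
proof -
  define Zg Zh where "Zg = integral\<^sup>L lborel g" and "Zh = integral\<^sup>L lborel h"
  have "Zg \<le> Zh" unfolding Zg_def Zh_def using int_g int_h g_le_h by (intro integral_mono) auto
  have "0 \<le> k" using g_le_h diff_le by (meson diff_ge_0_iff_ge order_trans)
  have "0 < Zh" using Zg_pos \<open>Zg \<le> Zh\<close> Zg_def by simp
  define w where "w x = Zg / Zh\<^sup>2 * (g x + (2 + 2 * k) * (h x - g x))" for x
  have w_nonneg: "0 \<le> w x" for x
    unfolding w_def using g_nonneg[of x] g_le_h[of x] \<open>0 \<le> k\<close> Zg_pos Zg_def by simp
  have pointwise: "normalized g x * (normalized h x / normalized g x)\<^sup>2 \<le> w x" for x
    unfolding normalized_def w_def Zg_def[symmetric] Zh_def[symmetric]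
    using g_nonneg g_le_h diff_le g_large Zg_pos \<open>0 < Zh\<close> Zg_def
    by (intro normalized_ratio_square_le) auto
  have "(\<integral>\<^sup>+ x. (normalized h x / normalized g x)\<^sup>2 \<partial>density lborel (normalized g))
      = (\<integral>\<^sup>+ x. normalized g x * (normalized h x / normalized g x)\<^sup>2 \<partial>lborel)"
    using g_nonneg Zg_pos
    by (simp add: nn_integral_density normalized_def ennreal_mult'[symmetric])
  also have "\<dots> \<le> (\<integral>\<^sup>+ x. w x \<partial>lborel)"
    using pointwise by (intro nn_integral_mono) (simp add: ennreal_leI)
  also have "\<dots> = ennreal (Zg / Zh\<^sup>2 * (Zg + (2 + 2 * k) * (Zh - Zg)))"
    using int_g int_h w_nonneg unfolding w_def Zg_def Zh_def
    by (subst nn_integral_eq_integral) auto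
  also have "\<dots> \<le> ennreal (1 + 2 * k * (Zh - Zg) / Zg)"
    using normalized_second_moment_le[of Zg "Zh - Zg" k] Zg_pos \<open>Zg \<le> Zh\<close> \<open>0 \<le> k\<close>
    unfolding Zg_def by (intro ennreal_leI) simp
  finally show ?thesis unfolding Zg_def Zh_def .
qed

lemma test_error_ge_sample_law:
  fixes f1 f2 :: "real^'n \<Rightarrow> real"
  assumes f1: "prob_density f1" and f2: "prob_density f2" and abs_cont: "\<And>x. f1 x = 0 \<Longrightarrow> f2 x = 0"
    and chi_square: "(\<integral>\<^sup>+ x. (f2 x / f1 x)\<^sup>2 \<partial>density lborel f1) \<le> ennreal q" and "0 \<le> q"
  shows "test_error_ge (sample_law f1 n) (sample_law f2 n) ((7/4 - q ^ n) / 2)"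
proof -
  have [measurable]: "f1 \<in> borel_measurable lborel" "f2 \<in> borel_measurable lborel"
    and nonneg: "\<And>x. 0 \<le> f1 x" "\<And>x. 0 \<le> f2 x"
    using f1 f2 unfolding prob_density_def by auto
  let ?M = "density lborel f1" and ?r = "\<lambda>x. f2 x / f1 x"
  have ratio: "density ?M ?r = density lborel f2"
    using nonneg abs_cont by (intro density_density_ratio) auto
  have mass: "(\<integral>\<^sup>+ x. ?r x \<partial>?M) = 1"
    using nonneg abs_cont f2 unfolding prob_density_def by (subst nn_integral_density_ratio) auto
  have "prob_space ?M"
    using f1 by (rule prob_space_density_if_prob_density)
  then have "test_error_ge (PiM {..<n} (\<lambda>_. ?M)) (PiM {..<n} (\<lambda>_. density ?M ?r))
      ((7/4 - q ^ card {..<n}) / 2)"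
    by (rule test_error_ge_PiM_density[OF _ _ _ mass chi_square \<open>0 \<le> q\<close>])
       (auto simp: nonneg divide_nonneg_nonneg)
  then show ?thesis unfolding sample_law_def ratio by simp
qed

lemma exp_one_eighth_le: "exp (1/8 :: real) \<le> 8/7"
proof -
  have "7/8 \<le> exp (-1/8 :: real)" using exp_ge_add_one_self[of "-1/8 :: real"] by simp
  then show ?thesis by (simp add: exp_minus field_simps)
qed

lemma one_plus_power_le:
  fixes t :: real
  assumes "0 \<le> t" "real n * t \<le> 1/8"
  shows "(1 + t) ^ n \<le> 8/7"
proof -
  have "(1 + t) ^ n \<le> exp t ^ n"
    using assms by (intro power_mono) (auto simp: add.commute exp_ge_add_one_self)
  also have "\<dots> = exp (real n * t)" by (simp add: exp_of_nat_mult)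
  also have "\<dots> \<le> 8/7" using assms exp_one_eighth_le by (smt (verit) exp_le_cancel_iff)
  finally show ?thesis .
qed

lemma rate_bounds:
  fixes \<beta> E A :: real and n :: nat
  assumes "0 < \<beta>" "1 \<le> E" "2 * 2 powr (1/\<beta>) \<le> A"
  defines "\<delta> \<equiv> real n powr (-1/E) / A"
  shows "0 \<le> \<delta>" "(2 * \<delta>) powr \<beta> \<le> 1/2" "real n * \<delta> powr E \<le> 1/A"
proof -
  have "1 \<le> 2 powr (1/\<beta>)" using assms by (intro ge_one_powr_ge_zero) auto
  then have "2 \<le> A" using assms by linarith
  show "0 \<le> \<delta>" unfolding \<delta>_def using \<open>2 \<le> A\<close> by simp
  have "real n powr (-1/E) \<le> 1"
    using assms by (cases "n = 0") (auto intro: ge_one_powr_ge_zero simp: powr_minus_divide divide_le_eq)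
  then have "2 * \<delta> \<le> 2 / (2 * 2 powr (1/\<beta>))"
    unfolding \<delta>_def using assms \<open>2 \<le> A\<close> by (auto simp: field_simps intro: order_trans[OF _ assms(3)] mult_mono)
  also have "\<dots> = 2 powr (-1/\<beta>)" by (simp add: powr_minus_divide)
  finally have "(2 * \<delta>) powr \<beta> \<le> (2 powr (-1/\<beta>)) powr \<beta>"
    using \<open>0 \<le> \<delta>\<close> assms by (intro powr_mono2) auto
  also have "\<dots> = 2 powr (-1/\<beta> * \<beta>)" by (rule powr_powr)
  also have "\<dots> = 1/2" using assms by (simp add: powr_minus_divide)
  finally show "(2 * \<delta>) powr \<beta> \<le> 1/2" .
  show "real n * \<delta> powr E \<le> 1/A"
  proof (cases "n = 0")
    case False
    have "\<delta> powr E = (real n powr (-1/E)) powr E / A powr E"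
      unfolding \<delta>_def using \<open>2 \<le> A\<close> by (simp add: powr_divide)
    also have "(real n powr (-1/E)) powr E = real n powr (-1/E * E)" by (rule powr_powr)
    also have "\<dots> = 1 / real n" using False assms by (simp add: powr_minus_divide)
    finally have "real n * \<delta> powr E = 1 / A powr E" using False by simp
    also have "\<dots> \<le> 1 / A"
      using powr_mono[OF \<open>1 \<le> E\<close>, of A] \<open>2 \<le> A\<close> by (intro divide_left_mono) auto
    finally show ?thesis .
  qed (use \<open>2 \<le> A\<close> in simp)
qed

section \<open>Cusp bumps\<close>

definition bump :: "real \<Rightarrow> 'a::euclidean_space \<Rightarrow> real" where
  "bump \<beta> x = max 0 (1 - infnorm x powr \<beta>)"

definition bump_slope :: "real \<Rightarrow> real" where
  "bump_slope \<beta> = 1 + 2 powr \<beta>"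

definition perturbed_bump :: "real \<Rightarrow> real \<Rightarrow> 'a::euclidean_space \<Rightarrow> real" where
  "perturbed_bump \<beta> \<delta> x =
     max (bump \<beta> x) (1 + \<delta> powr \<beta> - bump_slope \<beta> * infnorm (x - \<delta> *\<^sub>R One) powr \<beta>)"

lemma borel_measurable_bump [measurable]: "bump \<beta> \<in> borel_measurable borel"
  unfolding bump_def by measurable

lemma borel_measurable_perturbed_bump [measurable]: "perturbed_bump \<beta> \<delta> \<in> borel_measurable borel"
  unfolding perturbed_bump_def by measurable

locale bump_shape =
  fixes \<beta> :: real
  assumes beta_pos: "0 < \<beta>"
begin

lemma bump_nonneg: "0 \<le> bump \<beta> x"
  unfolding bump_def by simp

lemma bump_le_one: "bump \<beta> x \<le> 1"
  unfolding bump_def by simp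

lemma bump_lower: "1 - infnorm x powr \<beta> \<le> bump \<beta> x"
  unfolding bump_def by simp

lemma bump_inside: "infnorm x \<le> 1 \<Longrightarrow> bump \<beta> x = 1 - infnorm x powr \<beta>"
  unfolding bump_def using powr_le1[of \<beta> "infnorm x"] beta_pos infnorm_pos_le[of x] by auto

lemma bump_outside: "1 \<le> infnorm x \<Longrightarrow> bump \<beta> x = 0"
  unfolding bump_def using ge_one_powr_ge_zero[of "infnorm x" \<beta>] beta_pos by auto

lemma bump_zero: "bump \<beta> 0 = 1"
  unfolding bump_def using beta_pos by (simp add: infnorm_0)

lemma bump_support: "bump \<beta> x \<noteq> 0 \<Longrightarrow> infnorm x \<le> 1"
  using bump_outside by force

lemma bump_profile:
  "bump \<beta> 0 - infnorm x powr \<beta> \<le> bump \<beta> x"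
  "bump \<beta> x \<le> bump \<beta> 0 - min (infnorm x) 1 powr \<beta>"
  using bump_lower[of x] bump_inside[of x] bump_outside[of x]
  by (auto simp: bump_zero min_def)

lemma bump_slope_ge_2: "2 \<le> bump_slope \<beta>"
  unfolding bump_slope_def using beta_pos by (simp add: ge_one_powr_ge_zero)

lemma integrable_bump: "integrable lborel (bump \<beta> :: 'a::euclidean_space \<Rightarrow> real)"
  by (rule integrable_cube_supported[of _ 1 0 1]) (auto simp: bump_nonneg bump_le_one bump_support)

lemma integral_bump_le: "integral\<^sup>L lborel (bump \<beta> :: 'a::euclidean_space \<Rightarrow> real) \<le> 2 ^ DIM('a)"
  using integral_cube_supported_le[of "bump \<beta> :: 'a \<Rightarrow> real" 1 0 1] by (simp add: bump_nonneg bump_le_one bump_support)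

lemma integral_bump_pos: "0 < integral\<^sup>L lborel (bump \<beta> :: 'a::euclidean_space \<Rightarrow> real)"
proof -
  define r where "r = (1/2) powr (1/\<beta>)"
  have r_pos: "0 < r" unfolding r_def by simp
  have r_powr: "r powr \<beta> = 1/2" unfolding r_def using beta_pos by (simp add: powr_powr)
  let ?C = "cbox (0 - r *\<^sub>R One) (0 + r *\<^sub>R One) :: 'a set"
  have le: "1/2 * indicator ?C x \<le> bump \<beta> x" for x :: 'a
  proof (cases "x \<in> ?C")
    case True
    then have "infnorm x powr \<beta> \<le> r powr \<beta>"
      using infnorm_diff_le_iff_cbox[of x 0 r] infnorm_pos_le[of x] beta_pos
      by (intro powr_mono2) auto
    then show ?thesis using True bump_lower[of x] r_powr by simp
  qed (simp add: bump_nonneg)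
  have "integrable lborel (\<lambda>x. 1/2 * indicator ?C x :: real)"
    using emeasure_lborel_cbox_finite by (intro integrable_mult_right integrable_real_indicator) auto
  then have "1/2 * (2 * r) ^ DIM('a) \<le> integral\<^sup>L lborel (bump \<beta> :: 'a \<Rightarrow> real)"
    using integral_mono[OF _ integrable_bump le] measure_infnorm_cube[of r "0::'a"] r_pos by simp
  moreover have "0 < 1/2 * (2 * r) ^ DIM('a)" using r_pos by simp
  ultimately show ?thesis by linarith
qed

lemma prob_density_bump: "prob_density (normalized (bump \<beta>) :: real^'n \<Rightarrow> real)"
  by (intro prob_density_normalized integrable_bump integral_bump_pos) (auto simp: bump_nonneg)

lemma compact_support_bump: "compact_support (normalized (bump \<beta>) :: real^'n \<Rightarrow> real)"
  by (intro compact_support_normalized[where r=1] bump_support)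

lemma two_powr_minus_beta_le_1: "2 powr (-\<beta>) \<le> 1"
  using powr_mono[of "-\<beta>" 0 2] beta_pos by simp

lemma mode_constant_lt_inverse_mass:
  "2 powr (-\<beta>) / 2 ^ (CARD('n) + 1) < 1 / integral\<^sup>L lborel (bump \<beta> :: real^'n \<Rightarrow> real)"
proof -
  have "2 powr (-\<beta>) / 2 ^ (CARD('n) + 1) \<le> 1 / 2 ^ (CARD('n) + 1)"
    using two_powr_minus_beta_le_1 by (intro divide_right_mono) auto
  also have "\<dots> < 1 / 2 ^ CARD('n)" by (intro divide_strict_left_mono) auto
  also have "\<dots> \<le> 1 / integral\<^sup>L lborel (bump \<beta> :: real^'n \<Rightarrow> real)"
    using integral_bump_pos[where 'a="real^'n"] integral_bump_le[where 'a="real^'n"]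
    by (intro divide_left_mono) auto
  finally show ?thesis .
qed

lemma inverse_mass_le_slope_mass:
  "1 / integral\<^sup>L lborel (bump \<beta> :: 'a::euclidean_space \<Rightarrow> real)
     \<le> bump_slope \<beta> / integral\<^sup>L lborel (bump \<beta> :: 'a \<Rightarrow> real)"
  using integral_bump_pos[where 'a='a] bump_slope_ge_2 by (intro divide_right_mono) auto

lemma mode_constants_bump:
  "0 < 2 powr (-\<beta>) / 2 ^ (CARD('n) + 1)"
  "2 powr (-\<beta>) / 2 ^ (CARD('n) + 1) < bump_slope \<beta> / integral\<^sup>L lborel (bump \<beta> :: real^'n \<Rightarrow> real)"
  using mode_constant_lt_inverse_mass[where 'n='n] inverse_mass_le_slope_mass[where 'a="real^'n"]
  by simp_all

lemma mode_regular_bump: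
  assumes "c0 \<le> 2 powr (-\<beta>) / 2 ^ (CARD('n) + 1)"
    and "bump_slope \<beta> / integral\<^sup>L lborel (bump \<beta> :: real^'n \<Rightarrow> real) \<le> C0"
  shows "mode_regular c0 C0 1 \<beta> (normalized (bump \<beta>) :: real^'n \<Rightarrow> real) 0"
proof (rule mode_regular_normalized[where c=1 and C=1])
  show "c0 \<le> 1 / integral\<^sup>L lborel (bump \<beta> :: real^'n \<Rightarrow> real)"
    using assms(1) mode_constant_lt_inverse_mass[where 'n='n] by linarith
  show "1 / integral\<^sup>L lborel (bump \<beta> :: real^'n \<Rightarrow> real) \<le> C0"
    using assms(2) inverse_mass_le_slope_mass[where 'a="real^'n"] by linarith
qed (use integral_bump_pos bump_profile in auto)

end

lemma powr_add_le:
  fixes u v b :: real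
  assumes "0 \<le> u" "0 \<le> v" "0 < b"
  shows "(u + v) powr b \<le> 2 powr b * (u powr b + v powr b)"
proof -
  have "(u + v) powr b \<le> (2 * max u v) powr b"
    using assms by (intro powr_mono2) auto
  also have "\<dots> = 2 powr b * max u v powr b"
    using assms by (simp add: powr_mult)
  also have "max u v powr b \<le> u powr b + v powr b"
    by (simp add: max_def)
  finally show ?thesis by simp
qed

locale bump_perturbation = bump_shape +
  fixes \<delta> :: real
  assumes delta_nonneg: "0 \<le> \<delta>" and delta_small: "(2 * \<delta>) powr \<beta> \<le> 1/2"
begin

abbreviation peak :: "'a::euclidean_space" where "peak \<equiv> \<delta> *\<^sub>R One"

lemma infnorm_peak: "infnorm peak = \<delta>"
  using delta_nonneg by (rule infnorm_scaleR_One)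

lemma infnorm_le_dist_peak: "infnorm x \<le> infnorm (x - peak) + \<delta>"
  using infnorm_triangle[of "x - peak" peak] by (simp add: infnorm_peak)

lemma delta_lt_half: "2 * \<delta> < 1"
proof (rule ccontr)
  assume "\<not> 2 * \<delta> < 1"
  then have "1 \<le> (2 * \<delta>) powr \<beta>" using beta_pos by (simp add: ge_one_powr_ge_zero)
  then show False using delta_small by simp
qed

lemma bump_le_perturbed: "bump \<beta> x \<le> perturbed_bump \<beta> \<delta> x"
  unfolding perturbed_bump_def by simp

text \<open>Outside the cube of radius \<open>\<delta>\<close> around the peak, \<open>infnorm x \<le> 2 * infnorm (x - peak)\<close>
  and \<open>\<delta> \<le> infnorm (x - peak)\<close>, so the slope \<open>1 + 2 powr \<beta>\<close> pushes the cusp below the bump.\<close>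
lemma perturbation_support:
  assumes "perturbed_bump \<beta> \<delta> x \<noteq> bump \<beta> x"
  shows "infnorm (x - peak) \<le> \<delta>"
proof (rule ccontr)
  let ?r = "infnorm (x - peak)"
  assume "\<not> ?r \<le> \<delta>"
  then have r: "\<delta> < ?r" by simp
  have "bump \<beta> x < 1 + \<delta> powr \<beta> - bump_slope \<beta> * ?r powr \<beta>"
    using assms unfolding perturbed_bump_def by (auto simp: max_def split: if_splits)
  then have "bump_slope \<beta> * ?r powr \<beta> < \<delta> powr \<beta> + infnorm x powr \<beta>"
    using bump_lower[of x] by linarith
  moreover have "\<delta> powr \<beta> \<le> ?r powr \<beta>"
    using r delta_nonneg beta_pos by (intro powr_mono2) auto
  moreover have "infnorm x powr \<beta> \<le> (2 * ?r) powr \<beta>"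
    using infnorm_le_dist_peak[of x] r delta_nonneg beta_pos infnorm_pos_le[of x]
    by (intro powr_mono2) auto
  ultimately show False
    by (simp add: bump_slope_def powr_mult algebra_simps)
qed

lemma perturbation_support_near_0:
  assumes "perturbed_bump \<beta> \<delta> x \<noteq> bump \<beta> x"
  shows "infnorm x \<le> 2 * \<delta>"
  using perturbation_support[OF assms] infnorm_le_dist_peak[of x] by simp

lemma bump_ge_half_on_perturbation:
  assumes "perturbed_bump \<beta> \<delta> x \<noteq> bump \<beta> x"
  shows "1/2 \<le> bump \<beta> x"
proof -
  have "infnorm x powr \<beta> \<le> (2 * \<delta>) powr \<beta>"
    using perturbation_support_near_0[OF assms] infnorm_pos_le[of x] beta_pos
    by (intro powr_mono2) auto
  then show ?thesis using bump_lower[of x] delta_small by linarith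
qed

lemma perturbation_le: "perturbed_bump \<beta> \<delta> x - bump \<beta> x \<le> bump_slope \<beta> * \<delta> powr \<beta>"
proof (cases "perturbed_bump \<beta> \<delta> x = bump \<beta> x")
  case True
  then show ?thesis using delta_nonneg bump_slope_ge_2 by simp
next
  case False
  have "perturbed_bump \<beta> \<delta> x \<le> 1 + \<delta> powr \<beta>"
    unfolding perturbed_bump_def using bump_le_one[of x] bump_slope_ge_2
    by (auto intro!: add_increasing2)
  moreover have "infnorm x powr \<beta> \<le> (2 * \<delta>) powr \<beta>"
    using perturbation_support_near_0[OF False] infnorm_pos_le[of x] beta_pos
    by (intro powr_mono2) auto
  ultimately show ?thesis
    using bump_lower[of x] delta_nonneg by (simp add: bump_slope_def powr_mult algebra_simps)
qed

lemma perturbed_bump_nonneg: "0 \<le> perturbed_bump \<beta> \<delta> x"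
  using bump_le_perturbed bump_nonneg order_trans by blast

lemma perturbed_bump_le_2: "perturbed_bump \<beta> \<delta> x \<le> 2"
proof -
  have "\<delta> powr \<beta> \<le> 1"
    using delta_lt_half delta_nonneg beta_pos by (intro powr_le1) auto
  moreover have "0 \<le> bump_slope \<beta> * infnorm (x - peak) powr \<beta>"
    using bump_slope_ge_2 by simp
  ultimately show ?thesis unfolding perturbed_bump_def using bump_le_one[of x] by auto
qed

lemma perturbed_bump_support: "perturbed_bump \<beta> \<delta> x \<noteq> 0 \<Longrightarrow> infnorm x \<le> 1"
  by (metis bump_support delta_lt_half perturbation_support_near_0 less_eq_real_def order_trans)

lemma perturbed_bump_vanishes_with_bump: "bump \<beta> x = 0 \<Longrightarrow> perturbed_bump \<beta> \<delta> x = 0"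
  by (cases "perturbed_bump \<beta> \<delta> x = bump \<beta> x") (use bump_ge_half_on_perturbation[of x] in auto)

lemma perturbed_bump_peak: "perturbed_bump \<beta> \<delta> peak = 1 + \<delta> powr \<beta>"
proof -
  have "bump \<beta> (peak :: 'a) \<le> 1 + \<delta> powr \<beta>"
    using bump_le_one[of "peak :: 'a"] powr_ge_zero[of \<delta> \<beta>] by linarith
  then show ?thesis unfolding perturbed_bump_def using beta_pos by (simp add: infnorm_0)
qed

lemma perturbed_bump_profile:
  "perturbed_bump \<beta> \<delta> peak - bump_slope \<beta> * infnorm (x - peak) powr \<beta> \<le> perturbed_bump \<beta> \<delta> x"
  "perturbed_bump \<beta> \<delta> x \<le> perturbed_bump \<beta> \<delta> peak - 2 powr (-\<beta>) * min (infnorm (x - peak)) 1 powr \<beta>"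
proof -
  show "perturbed_bump \<beta> \<delta> peak - bump_slope \<beta> * infnorm (x - peak) powr \<beta> \<le> perturbed_bump \<beta> \<delta> x"
    unfolding perturbed_bump_peak unfolding perturbed_bump_def by simp
next
  let ?r = "infnorm (x - peak)"
  let ?m = "min ?r 1 powr \<beta>"
  have m_le: "?m \<le> ?r powr \<beta>" "?m \<le> 1"
    using infnorm_pos_le[of "x - peak"] beta_pos by (auto intro: powr_mono2 powr_le1)
  have "2 powr (-\<beta>) * ?m \<le> bump_slope \<beta> * ?r powr \<beta>"
    using two_powr_minus_beta_le_1 bump_slope_ge_2 m_le by (intro mult_mono) auto
  moreover have "bump \<beta> x \<le> 1 + \<delta> powr \<beta> - 2 powr (-\<beta>) * ?m"
  proof (cases "infnorm x \<le> 1")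
    case True
    have "2 powr (-\<beta>) * ?m \<le> 2 powr (-\<beta>) * ?r powr \<beta>"
      using m_le by (intro mult_left_mono) auto
    also have "\<dots> \<le> 2 powr (-\<beta>) * (infnorm x + \<delta>) powr \<beta>"
      using infnorm_triangle[of x "- peak"] infnorm_pos_le[of "x - peak"] beta_pos
      by (intro mult_left_mono powr_mono2) (auto simp: infnorm_neg infnorm_peak)
    also have "\<dots> \<le> infnorm x powr \<beta> + \<delta> powr \<beta>"
      using powr_add_le[of "infnorm x" \<delta> \<beta>] infnorm_pos_le[of x] delta_nonneg beta_pos
      by (simp add: powr_minus field_simps)
    finally show ?thesis using bump_inside[OF True] by linarith
  next
    case False
    have "2 powr (-\<beta>) * ?m \<le> 1"
      using two_powr_minus_beta_le_1 m_le by (simp add: mult_le_one)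
    then show ?thesis using bump_outside[of x] False powr_ge_zero[of \<delta> \<beta>] by linarith
  qed
  ultimately show "perturbed_bump \<beta> \<delta> x \<le> perturbed_bump \<beta> \<delta> peak - 2 powr (-\<beta>) * ?m"
    unfolding perturbed_bump_peak unfolding perturbed_bump_def by auto
qed

lemma integrable_perturbed_bump:
  "integrable lborel (perturbed_bump \<beta> \<delta> :: 'a::euclidean_space \<Rightarrow> real)"
  by (rule integrable_cube_supported[of _ 2 0 1])
     (auto simp: perturbed_bump_nonneg perturbed_bump_le_2 perturbed_bump_support)

lemma integral_perturbed_bump_le:
  "integral\<^sup>L lborel (perturbed_bump \<beta> \<delta> :: 'a::euclidean_space \<Rightarrow> real) \<le> 2 * 2 ^ DIM('a)"
  using integral_cube_supported_le[of "perturbed_bump \<beta> \<delta> :: 'a \<Rightarrow> real" 2 0 1]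
  by (simp add: perturbed_bump_nonneg perturbed_bump_le_2 perturbed_bump_support)

lemma integral_bump_le_perturbed:
  "integral\<^sup>L lborel (bump \<beta> :: 'a::euclidean_space \<Rightarrow> real)
     \<le> integral\<^sup>L lborel (perturbed_bump \<beta> \<delta> :: 'a \<Rightarrow> real)"
  by (intro integral_mono integrable_bump integrable_perturbed_bump bump_le_perturbed)

lemma integral_perturbation_le:
  "integral\<^sup>L lborel (perturbed_bump \<beta> \<delta> :: 'a::euclidean_space \<Rightarrow> real)
     - integral\<^sup>L lborel (bump \<beta> :: 'a \<Rightarrow> real)
   \<le> bump_slope \<beta> * \<delta> powr \<beta> * (2 * \<delta>) ^ DIM('a)"
proof -
  have "integral\<^sup>L lborel (\<lambda>x::'a. perturbed_bump \<beta> \<delta> x - bump \<beta> x)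
      \<le> bump_slope \<beta> * \<delta> powr \<beta> * (2 * \<delta>) ^ DIM('a)"
    by (rule integral_cube_supported_le[of _ _ peak])
       (use bump_le_perturbed perturbation_le perturbation_support delta_nonneg in force)+
  moreover have "integral\<^sup>L lborel (\<lambda>x::'a. perturbed_bump \<beta> \<delta> x - bump \<beta> x)
      = integral\<^sup>L lborel (perturbed_bump \<beta> \<delta> :: 'a \<Rightarrow> real) - integral\<^sup>L lborel (bump \<beta> :: 'a \<Rightarrow> real)"
    by (intro Bochner_Integration.integral_diff integrable_perturbed_bump integrable_bump)
  ultimately show ?thesis by simp
qed

lemma integral_perturbed_bump_pos:
  "0 < integral\<^sup>L lborel (perturbed_bump \<beta> \<delta> :: 'a::euclidean_space \<Rightarrow> real)"
  by (rule less_le_trans[OF integral_bump_pos integral_bump_le_perturbed])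

lemma prob_density_perturbed_bump: "prob_density (normalized (perturbed_bump \<beta> \<delta>) :: real^'n \<Rightarrow> real)"
  by (intro prob_density_normalized integrable_perturbed_bump integral_perturbed_bump_pos)
     (auto simp: perturbed_bump_nonneg)

lemma compact_support_perturbed_bump:
  "compact_support (normalized (perturbed_bump \<beta> \<delta>) :: real^'n \<Rightarrow> real)"
  by (intro compact_support_normalized[where r=1] perturbed_bump_support)

lemma mode_regular_perturbed_bump:
  assumes "c0 \<le> 2 powr (-\<beta>) / 2 ^ (CARD('n) + 1)"
    and "bump_slope \<beta> / integral\<^sup>L lborel (bump \<beta> :: real^'n \<Rightarrow> real) \<le> C0"
  shows "mode_regular c0 C0 1 \<beta> (normalized (perturbed_bump \<beta> \<delta>) :: real^'n \<Rightarrow> real) peak"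
proof (rule mode_regular_normalized[where c="2 powr (-\<beta>)" and C="bump_slope \<beta>"])
  let ?Z = "integral\<^sup>L lborel (bump \<beta> :: real^'n \<Rightarrow> real)"
  let ?Zh = "integral\<^sup>L lborel (perturbed_bump \<beta> \<delta> :: real^'n \<Rightarrow> real)"
  show "0 < ?Zh" by (rule integral_perturbed_bump_pos)
  have "2 powr (-\<beta>) / 2 ^ (CARD('n) + 1) \<le> 2 powr (-\<beta>) / ?Zh"
    using integral_perturbed_bump_le[where 'a="real^'n"] integral_perturbed_bump_pos[where 'a="real^'n"]
    by (intro divide_left_mono) auto
  then show "c0 \<le> 2 powr (-\<beta>) / ?Zh" using assms(1) by linarith
  have "bump_slope \<beta> / ?Zh \<le> bump_slope \<beta> / ?Z"
    using integral_bump_pos[where 'a="real^'n"] integral_bump_le_perturbed[where 'a="real^'n"] bump_slope_ge_2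
    by (intro divide_left_mono) auto
  then show "bump_slope \<beta> / ?Zh \<le> C0" using assms(2) by linarith
qed (fact perturbed_bump_profile)+

lemma normalized_perturbed_bump_vanishes:
  "normalized (bump \<beta>) x = 0 \<Longrightarrow> normalized (perturbed_bump \<beta> \<delta>) (x :: 'a::euclidean_space) = 0"
  using perturbed_bump_vanishes_with_bump[of x] integral_bump_pos[where 'a='a]
  by (simp add: normalized_def)

lemma chi_square_bumps:
  "(\<integral>\<^sup>+ x. (normalized (perturbed_bump \<beta> \<delta>) x / normalized (bump \<beta>) x)\<^sup>2
      \<partial>density lborel (normalized (bump \<beta> :: 'a::euclidean_space \<Rightarrow> real)))
   \<le> ennreal (1 + 2 ^ (DIM('a) + 1) * (bump_slope \<beta>)\<^sup>2 * \<delta> powr (DIM('a) + 2 * \<beta>)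
      / integral\<^sup>L lborel (bump \<beta> :: 'a \<Rightarrow> real))"
proof -
  let ?Zg = "integral\<^sup>L lborel (bump \<beta> :: 'a \<Rightarrow> real)"
  let ?Zh = "integral\<^sup>L lborel (perturbed_bump \<beta> \<delta> :: 'a \<Rightarrow> real)"
  have "(\<integral>\<^sup>+ x. (normalized (perturbed_bump \<beta> \<delta>) x / normalized (bump \<beta>) x)\<^sup>2
      \<partial>density lborel (normalized (bump \<beta> :: 'a \<Rightarrow> real)))
    \<le> ennreal (1 + 2 * (bump_slope \<beta> * \<delta> powr \<beta>) * (?Zh - ?Zg) / ?Zg)"
    by (rule chi_square_normalized_le[OF _ _ integrable_bump integrable_perturbed_bump bump_nonneg
          bump_le_perturbed perturbation_le bump_ge_half_on_perturbation integral_bump_pos]) measurable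
  also have "2 * (bump_slope \<beta> * \<delta> powr \<beta>) * (?Zh - ?Zg)
      \<le> 2 * (bump_slope \<beta> * \<delta> powr \<beta>) * (bump_slope \<beta> * \<delta> powr \<beta> * (2 * \<delta>) ^ DIM('a))"
    using integral_perturbation_le bump_slope_ge_2 by (intro mult_left_mono) auto
  also have "\<dots> = 2 ^ (DIM('a) + 1) * (bump_slope \<beta>)\<^sup>2 * \<delta> powr (DIM('a) + 2 * \<beta>)"
  proof (cases "\<delta> = 0")
    case False
    then have "\<delta> powr (DIM('a) + 2 * \<beta>) = \<delta> ^ DIM('a) * \<delta> powr \<beta> * \<delta> powr \<beta>"
      using delta_nonneg by (simp add: powr_add powr_realpow flip: powr_add[of \<delta> \<beta> \<beta>])
    then show ?thesis by (simp add: power_mult_distrib power2_eq_square)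
  qed simp
  finally show ?thesis
    using integral_bump_pos[where 'a='a] by (simp add: ennreal_leI divide_right_mono)
qed

lemma test_error_ge_bumps:
  fixes n :: nat
  defines "Z \<equiv> integral\<^sup>L lborel (bump \<beta> :: real^'n \<Rightarrow> real)"
  assumes "real n * \<delta> powr (CARD('n) + 2 * \<beta>) \<le> Z / (2 ^ (CARD('n) + 4) * (bump_slope \<beta>)\<^sup>2)"
  shows "test_error_ge (sample_law (normalized (bump \<beta>) :: real^'n \<Rightarrow> real) n)
    (sample_law (normalized (perturbed_bump \<beta> \<delta>)) n) (1/5)"
proof -
  define t where "t = 2 ^ (CARD('n) + 1) * (bump_slope \<beta>)\<^sup>2 * \<delta> powr (CARD('n) + 2 * \<beta>) / Z"
  have "0 < Z" unfolding Z_def by (rule integral_bump_pos)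
  then have "0 \<le> t" unfolding t_def by simp
  have "real n * t = 2 ^ (CARD('n) + 1) * (bump_slope \<beta>)\<^sup>2 / Z * (real n * \<delta> powr (CARD('n) + 2 * \<beta>))"
    unfolding t_def by (simp add: field_simps)
  also have "\<dots> \<le> 2 ^ (CARD('n) + 1) * (bump_slope \<beta>)\<^sup>2 / Z * (Z / (2 ^ (CARD('n) + 4) * (bump_slope \<beta>)\<^sup>2))"
    using assms(2) \<open>0 < Z\<close> by (intro mult_left_mono) auto
  also have "\<dots> = 1/8"
    using \<open>0 < Z\<close> bump_slope_ge_2 by (simp add: field_simps power_add)
  finally have "(1 + t) ^ n \<le> 8/7" by (rule one_plus_power_le[OF \<open>0 \<le> t\<close>])
  moreover have "test_error_ge (sample_law (normalized (bump \<beta>) :: real^'n \<Rightarrow> real) n)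
    (sample_law (normalized (perturbed_bump \<beta> \<delta>)) n) ((7/4 - (1 + t) ^ n) / 2)"
    using chi_square_bumps[where 'a="real^'n"] \<open>0 \<le> t\<close> unfolding t_def Z_def
    by (intro test_error_ge_sample_law prob_density_bump prob_density_perturbed_bump
        normalized_perturbed_bump_vanishes) auto
  ultimately show ?thesis by (elim test_error_ge_mono) simp
qed

lemma indistinguishable_pair:
  fixes n :: nat
  defines "Z \<equiv> integral\<^sup>L lborel (bump \<beta> :: real^'n \<Rightarrow> real)"
  defines "c0 \<equiv> 2 powr (-\<beta>) / 2 ^ (CARD('n) + 1)" and "C0 \<equiv> bump_slope \<beta> / Z"
  assumes "real n * \<delta> powr (CARD('n) + 2 * \<beta>) \<le> Z / (2 ^ (CARD('n) + 4) * (bump_slope \<beta>)\<^sup>2)"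
  shows "\<exists>(f1 :: real^'n \<Rightarrow> real) f2 x1 x2.
    prob_density f1 \<and> prob_density f2 \<and> compact_support f1 \<and> compact_support f2 \<and>
    unique_mode f1 x1 \<and> unique_mode f2 x2 \<and> mode_regular c0 C0 1 \<beta> f1 x1 \<and> mode_regular c0 C0 1 \<beta> f2 x2 \<and>
    \<delta> \<le> sup_norm (x1 - x2) \<and> test_error_ge (sample_law f1 n) (sample_law f2 n) (1/5)"
proof -
  have bump: "mode_regular c0 C0 1 \<beta> (normalized (bump \<beta>) :: real^'n \<Rightarrow> real) 0"
    and perturbed: "mode_regular c0 C0 1 \<beta> (normalized (perturbed_bump \<beta> \<delta>) :: real^'n \<Rightarrow> real) peak"
    unfolding c0_def C0_def Z_def by (intro mode_regular_bump mode_regular_perturbed_bump order_refl)+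
  have "0 < c0" unfolding c0_def by simp
  have "sup_norm (0 - peak :: real^'n) = \<delta>"
    by (simp add: sup_norm_eq_infnorm infnorm_neg infnorm_peak)
  moreover have "test_error_ge (sample_law (normalized (bump \<beta>) :: real^'n \<Rightarrow> real) n)
      (sample_law (normalized (perturbed_bump \<beta> \<delta>)) n) (1/5)"
    using assms(4) unfolding Z_def by (rule test_error_ge_bumps)
  ultimately show ?thesis
    using unique_mode_if_mode_regular[OF bump \<open>0 < c0\<close> _ beta_pos]
      unique_mode_if_mode_regular[OF perturbed \<open>0 < c0\<close> _ beta_pos] bump perturbed
      prob_density_bump prob_density_perturbed_bump compact_support_bump compact_support_perturbed_bump
    by (intro exI[where x="normalized (bump \<beta>) :: real^'n \<Rightarrow> real"] exI[where x="normalized (perturbed_bump \<beta> \<delta>)"]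
        exI[where x="0 :: real^'n"] exI[where x=peak] conjI) auto
qed

end

context bump_shape
begin

lemma indistinguishable_pair_at_rate:
  fixes n :: nat
  defines "Z \<equiv> integral\<^sup>L lborel (bump \<beta> :: real^'n \<Rightarrow> real)"
  assumes A: "2 * 2 powr (1/\<beta>) \<le> A" "2 ^ (CARD('n) + 4) * (bump_slope \<beta>)\<^sup>2 / Z \<le> A"
  shows "\<exists>(f1 :: real^'n \<Rightarrow> real) f2 x1 x2.
    prob_density f1 \<and> prob_density f2 \<and> compact_support f1 \<and> compact_support f2 \<and>
    unique_mode f1 x1 \<and> unique_mode f2 x2 \<and>
    mode_regular (2 powr (-\<beta>) / 2 ^ (CARD('n) + 1)) (bump_slope \<beta> / Z) 1 \<beta> f1 x1 \<and>
    mode_regular (2 powr (-\<beta>) / 2 ^ (CARD('n) + 1)) (bump_slope \<beta> / Z) 1 \<beta> f2 x2 \<and>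
    real n powr (- 1 / (real CARD('n) + 2 * \<beta>)) / A \<le> sup_norm (x1 - x2) \<and>
    test_error_ge (sample_law f1 n) (sample_law f2 n) (1/5)"
proof -
  define \<delta> where "\<delta> = real n powr (- 1 / (real CARD('n) + 2 * \<beta>)) / A"
  have "1 \<le> real CARD('n) + 2 * \<beta>" using beta_pos by (simp add: Suc_le_eq add_increasing2)
  note rate = rate_bounds[OF beta_pos this A(1), of n, folded \<delta>_def]
  interpret bump_perturbation \<beta> \<delta> using rate by unfold_locales
  have "0 < Z" unfolding Z_def by (rule integral_bump_pos)
  then have "1 / A \<le> Z / (2 ^ (CARD('n) + 4) * (bump_slope \<beta>)\<^sup>2)"
    using le_imp_inverse_le[OF A(2)] bump_slope_ge_2 by (simp add: inverse_eq_divide)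
  with rate(3) show ?thesis
    unfolding Z_def \<delta>_def[symmetric] by (intro indistinguishable_pair) linarith
qed

end

theorem theorem2:
  fixes \<beta> :: real
  assumes "\<beta> > 0"
  shows "\<exists>c0 C0 h0 A :: real. 0 < c0 \<and> c0 < C0 \<and> h0 > 0 \<and> A > 0 \<and>
    (\<forall>n::nat. \<exists>(f1 :: real^'n \<Rightarrow> real) f2 x1 x2.
       prob_density f1 \<and> prob_density f2 \<and>
       compact_support f1 \<and> compact_support f2 \<and>
       unique_mode f1 x1 \<and> unique_mode f2 x2 \<and>
       mode_regular c0 C0 h0 \<beta> f1 x1 \<and> mode_regular c0 C0 h0 \<beta> f2 x2 \<and>
       sup_norm (x1 - x2) \<ge> real n powr (- 1 / (real CARD('n) + 2 * \<beta>)) / A \<and>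
       (\<forall>\<psi>. \<psi> \<in> sample_law f1 n \<rightarrow>\<^sub>M count_space {1, 2::nat} \<longrightarrow>
          max (measure (sample_law f1 n) {\<omega> \<in> space (sample_law f1 n). \<psi> \<omega> \<noteq> 1})
              (measure (sample_law f2 n) {\<omega> \<in> space (sample_law f2 n). \<psi> \<omega> \<noteq> 2})
            \<ge> 1 / 5))"
proof -
  interpret bump_shape \<beta> using assms by unfold_locales
  define Z where "Z = integral\<^sup>L lborel (bump \<beta> :: real^'n \<Rightarrow> real)"
  define A where "A = max (2 * 2 powr (1/\<beta>)) (2 ^ (CARD('n) + 4) * (bump_slope \<beta>)\<^sup>2 / Z)"
  have A: "2 * 2 powr (1/\<beta>) \<le> A" "2 ^ (CARD('n) + 4) * (bump_slope \<beta>)\<^sup>2 / Z \<le> A"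
    unfolding A_def by simp_all
  then have "0 < A" by (smt (verit) powr_gt_zero)
  show ?thesis
    unfolding test_error_ge_def[symmetric]
    by (rule exI[of _ "2 powr (-\<beta>) / 2 ^ (CARD('n) + 1)"], rule exI[of _ "bump_slope \<beta> / Z"],
        rule exI[of _ 1], rule exI[of _ A])
       (intro conjI allI \<open>0 < A\<close> zero_less_one mode_constants_bump[where 'n='n, folded Z_def]
         indistinguishable_pair_at_rate[OF A[unfolded Z_def], folded Z_def])
qed

end
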